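(* Fix $n\in\mathbb N$ and let $\sigma_n$ be a strictly increasing function on $[0,1]$, twice differentiable on $(0,1)$ with $\sigma_n'>0$, satisfying for every $r\in(0,\infty)$ $$1+\frac{\sigma_n''(\Psi_n(r))\, \Psi_n(r)}{\sigma_n'(\Psi_n(r))} = \frac{2}{n} - \frac{c_n}{n^2\,\Psi_n(r)}\, r^n e^{-r^2/2},\qquad c_n^{-1} = 2^{\frac{n}{2}-1}\Gamma(n/2).$$ Then the function $y\mapsto\sigma_n(y^n)$ is strictly convex on $(0,1)$; equivalently, the function $\tau_n(x)=\sigma_n^{-1}(x)^{1/n}$ is strictly increasing and strictly concave on its domain (the range of $\sigma_n$).
   Context: $\gamma_n$ is the standard Gaussian measure on $\mathbb R^n$ with density $(2\pi)^{-n/2}e^{-|x|^2/2}$, and $\Psi_n(r)=\gamma_n(\{x\in\mathbb R^n:|x|\le r\})$. *)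

theory Defs
  imports "HOL-Analysis.Analysis"
begin

definition gaussian_measure :: "'n::finite itself \<Rightarrow> (real^'n) measure" where
  "gaussian_measure _ = density lborel
     (\<lambda>x. ennreal ((2 * pi) powr (- real CARD('n) / 2) * exp (- (norm x)\<^sup>2 / 2)))"

definition Psi :: "'n::finite itself \<Rightarrow> real \<Rightarrow> real" where
  "Psi T r = measure (gaussian_measure T) {x :: real^'n. norm x \<le> r}"

definition strict_convex_on :: "real set \<Rightarrow> (real \<Rightarrow> real) \<Rightarrow> bool" where
  "strict_convex_on S f \<longleftrightarrow>
     (\<forall>x\<in>S. \<forall>y\<in>S. \<forall>t. x \<noteq> y \<and> 0 < t \<and> t < 1 \<longrightarrow>
        f ((1 - t) * x + t * y) < (1 - t) * f x + t * f y)"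

end

theory Submission
  imports Defs "HOL-Probability.Probability"
begin

text \<open>
  Write \<open>x = \<Psi>\<^sub>n(r)\<close> and multiply the ODE by \<open>n \<sigma>'(x)\<close>; it becomes
  \<open>n x \<sigma>''(x) + (n - 1) \<sigma>'(x) = \<sigma>'(x) (1 - c\<^sub>n r\<^sup>n exp (- r\<^sup>2 / 2) / (n \<Psi>\<^sub>n(r)))\<close>.
  Since \<open>c\<^sub>n / n = (2\<pi>) powr (-n/2) vol(B\<^sub>1)\<close>, the subtracted quotient compares \<open>\<Psi>\<^sub>n(r)\<close> with the
  mass the ball of radius \<open>r\<close> would carry if the Gaussian density were constantly equal to its
  value on the boundary sphere; the density is larger inside, so the quotient is below 1.
  As \<open>\<Psi>\<^sub>n\<close> maps \<open>(0,\<infinity>)\<close> onto \<open>(0,1)\<close>, this holds for every \<open>x \<in> (0,1)\<close>. Finally, for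
  \<open>g(y) = \<sigma>(y\<^sup>n)\<close> one computes \<open>y\<^sup>2 g''(y) = n x (n x \<sigma>''(x) + (n - 1) \<sigma>'(x))\<close> with \<open>x = y\<^sup>n\<close>,
  so \<open>g'' > 0\<close> on \<open>(0,1)\<close>.
\<close>

section \<open>The standard Gaussian measure\<close>

lemma sum_Basis_inner_power2:
  "(\<Sum>b\<in>Basis. (x \<bullet> b)\<^sup>2) = (norm (x::'a::euclidean_space))\<^sup>2"
  unfolding power2_norm_eq_inner euclidean_inner[of x x] by (simp only: power2_eq_square)

lemma inverse_sqrt_power_eq_powr:
  assumes "a > 0"
  shows "(1 / sqrt a) ^ n = a powr (- real n / 2)"
proof -
  have "1 / sqrt a = a powr (- 1 / 2)"
    using assms by (simp add: powr_half_sqrt[symmetric] powr_minus_divide)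
  then show ?thesis
    using assms by (simp add: powr_realpow[symmetric] powr_powr)
qed

lemma gaussian_density_eq_prod_std_normal:
  fixes x :: "'a::euclidean_space"
  shows "(2 * pi) powr (- real DIM('a) / 2) * exp (- (norm x)\<^sup>2 / 2)
       = (\<Prod>b\<in>Basis. std_normal_density (x \<bullet> b))"
proof -
  have "(\<Prod>b\<in>Basis. std_normal_density (x \<bullet> b))
      = (\<Prod>b\<in>Basis. 1 / sqrt (2 * pi) * exp (- (x \<bullet> b)\<^sup>2 / 2))"
    by (simp add: std_normal_density_def)
  also have "\<dots> = (1 / sqrt (2 * pi)) ^ DIM('a) * exp (\<Sum>b\<in>Basis. - (x \<bullet> b)\<^sup>2 / 2)"
    unfolding prod.distrib prod_constant exp_sum[OF finite_Basis] ..
  also have "(\<Sum>b\<in>Basis. - (x \<bullet> b)\<^sup>2 / 2) = - (norm x)\<^sup>2 / 2"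
    unfolding sum_divide_distrib[symmetric] sum_negf sum_Basis_inner_power2 ..
  finally show ?thesis
    by (simp add: inverse_sqrt_power_eq_powr[of "2 * pi"])
qed

lemma space_gaussian_measure [simp]: "space (gaussian_measure TYPE('n::finite)) = UNIV"
  by (simp add: gaussian_measure_def)

lemma sets_gaussian_measure [simp]: "sets (gaussian_measure TYPE('n::finite)) = sets borel"
  by (simp add: gaussian_measure_def)

lemma emeasure_gaussian_measure:
  assumes "A \<in> sets borel"
  shows "emeasure (gaussian_measure TYPE('n::finite)) A =
    (\<integral>\<^sup>+x\<in>A. ennreal ((2 * pi) powr (- real CARD('n) / 2) * exp (- (norm x)\<^sup>2 / 2)) \<partial>lborel)"
  using assms by (simp add: gaussian_measure_def emeasure_density)

lemma prob_space_gaussian_measure: "prob_space (gaussian_measure TYPE('n::finite))"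
proof
  have "emeasure (gaussian_measure TYPE('n)) (space (gaussian_measure TYPE('n)))
      = (\<integral>\<^sup>+x. (\<Prod>b\<in>Basis. ennreal (std_normal_density (x \<bullet> b))) \<partial>(lborel :: (real^'n) measure))"
    using gaussian_density_eq_prod_std_normal[where 'a="real^'n"]
    by (simp add: emeasure_gaussian_measure prod_ennreal normal_density_nonneg)
  also have "\<dots> = (\<Prod>b\<in>(Basis :: (real^'n) set). \<integral>\<^sup>+x. ennreal (std_normal_density x) \<partial>lborel)"
    by (rule nn_integral_lborel_prod) auto
  also have "(\<integral>\<^sup>+x. ennreal (std_normal_density x) \<partial>lborel) = 1"
    using std_normal_moment_even[of 0]
    by (subst nn_integral_eq_integral) (auto simp: has_bochner_integral_iff)
  finally show "emeasure (gaussian_measure TYPE('n)) (space (gaussian_measure TYPE('n))) = 1"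
    by simp
qed

lemma emeasure_gaussian_measure_eq_measure:
  "emeasure (gaussian_measure TYPE('n::finite)) A = ennreal (measure (gaussian_measure TYPE('n)) A)"
  using finite_measure.emeasure_eq_measure prob_space.axioms(1)[OF prob_space_gaussian_measure] .

lemma measure_gaussian_measure_le:
  assumes "A \<in> sets borel" "emeasure lborel A < \<infinity>"
  shows "measure (gaussian_measure TYPE('n::finite)) A
    \<le> (2 * pi) powr (- real CARD('n) / 2) * measure lborel A"
proof -
  let ?p = "(2 * pi) powr (- real CARD('n) / 2)"
  have "emeasure (gaussian_measure TYPE('n)) A
      \<le> (\<integral>\<^sup>+x. ennreal ?p * indicator A x \<partial>lborel)"
    using assms(1) unfolding emeasure_gaussian_measure[OF assms(1)]
    by (intro nn_integral_mono mult_right_mono ennreal_leI) auto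
  also have "\<dots> = ennreal (?p * measure lborel A)"
    using assms by (simp add: nn_integral_cmult_indicator emeasure_eq_ennreal_measure ennreal_mult)
  finally show ?thesis
    by (simp add: emeasure_gaussian_measure_eq_measure ennreal_le_iff)
qed

section \<open>The distribution function \<open>\<Psi>\<^sub>n\<close> of the radius\<close>

lemma Psi_eq_measure_cball: "Psi TYPE('n::finite) r = measure (gaussian_measure TYPE('n)) (cball 0 r)"
  by (simp add: Psi_def cball_def dist_norm)

lemma Psi_0: "Psi TYPE('n::finite) 0 = 0"
proof -
  have "measure (gaussian_measure TYPE('n)) (cball 0 0)
      \<le> (2 * pi) powr (- real CARD('n) / 2) * measure lborel (cball (0::real^'n) 0)"
    by (rule measure_gaussian_measure_le) (auto simp: emeasure_cball)
  also have "measure lborel (cball (0::real^'n) 0) = 0"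
    by (simp add: content_cball)
  finally show ?thesis
    using measure_nonneg[of "gaussian_measure TYPE('n)" "cball 0 0"]
    unfolding Psi_eq_measure_cball by linarith
qed

lemma Psi_increment_le:
  assumes "0 \<le> s" "s \<le> r"
  shows "0 \<le> Psi TYPE('n::finite) r - Psi TYPE('n) s"
    and "Psi TYPE('n) r - Psi TYPE('n) s \<le> (2 * pi) powr (- real CARD('n) / 2)
           * unit_ball_vol (real CARD('n)) * (r ^ CARD('n) - s ^ CARD('n))"
proof -
  let ?G = "gaussian_measure TYPE('n)"
  let ?A = "cball (0::real^'n) r - cball 0 s"
  have sub: "cball (0::real^'n) s \<subseteq> cball 0 r"
    using assms by auto
  have Psi_diff: "measure ?G ?A = Psi TYPE('n) r - Psi TYPE('n) s"
    unfolding Psi_eq_measure_cball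
    by (rule measure_Diff) (auto simp: emeasure_gaussian_measure_eq_measure sub)
  then show "0 \<le> Psi TYPE('n::finite) r - Psi TYPE('n) s"
    by (metis measure_nonneg)
  have "measure lborel ?A = measure lborel (cball (0::real^'n) r) - measure lborel (cball (0::real^'n) s)"
    using assms by (intro measure_Diff) (auto simp: emeasure_cball sub)
  also have "\<dots> = unit_ball_vol (real CARD('n)) * (r ^ CARD('n) - s ^ CARD('n))"
    using assms by (simp add: content_cball algebra_simps)
  finally have volume_diff: "measure lborel ?A = unit_ball_vol (real CARD('n)) * (r ^ CARD('n) - s ^ CARD('n))" .
  have "emeasure lborel ?A \<le> emeasure lborel (cball (0::real^'n) r)"
    by (rule emeasure_mono) auto
  then have "emeasure lborel ?A < \<infinity>"
    using assms by (simp add: emeasure_cball) (metis ennreal_less_top order.strict_trans1)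
  then have "measure ?G ?A \<le> (2 * pi) powr (- real CARD('n) / 2) * measure lborel ?A"
    by (intro measure_gaussian_measure_le) auto
  then show "Psi TYPE('n) r - Psi TYPE('n) s \<le> (2 * pi) powr (- real CARD('n) / 2)
           * unit_ball_vol (real CARD('n)) * (r ^ CARD('n) - s ^ CARD('n))"
    by (simp add: Psi_diff volume_diff mult.assoc)
qed

lemma Psi_continuous_on: "continuous_on {0..} (Psi TYPE('n::finite))"
  unfolding continuous_on_def
proof
  fix r0 :: real
  assume r0: "r0 \<in> {0..}"
  define K where "K = (2 * pi) powr (- real CARD('n) / 2) * unit_ball_vol (real CARD('n))"
  have bound: "\<bar>Psi TYPE('n) r - Psi TYPE('n) r0\<bar> \<le> K * \<bar>r ^ CARD('n) - r0 ^ CARD('n)\<bar>"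
    if r: "r \<ge> 0" for r
  proof (cases "r0 \<le> r")
    case True
    then have "r0 ^ CARD('n) \<le> r ^ CARD('n)"
      using r0 by (intro power_mono) auto
    with True r0 show ?thesis
      using Psi_increment_le[of r0 r, where 'n='n] unfolding K_def by simp
  next
    case False
    then have "r ^ CARD('n) \<le> r0 ^ CARD('n)"
      using r by (intro power_mono) auto
    with False r show ?thesis
      using Psi_increment_le[of r r0, where 'n='n] unfolding K_def by (simp add: abs_minus_commute)
  qed
  have "\<forall>\<^sub>F r in at r0 within {0..}.
      norm (Psi TYPE('n) r - Psi TYPE('n) r0) \<le> K * \<bar>r ^ CARD('n) - r0 ^ CARD('n)\<bar>"
    unfolding eventually_at_filter by (intro always_eventually) (simp add: bound)
  moreover have "((\<lambda>r. K * \<bar>r ^ CARD('n) - r0 ^ CARD('n)\<bar>) \<longlongrightarrow> 0) (at r0 within {0..})"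
  proof -
    have "((\<lambda>r. K * \<bar>r ^ CARD('n) - r0 ^ CARD('n)\<bar>) \<longlongrightarrow> K * \<bar>r0 ^ CARD('n) - r0 ^ CARD('n)\<bar>)
        (at r0 within {0..})"
      by (intro tendsto_intros)
    then show ?thesis
      by simp
  qed
  ultimately have "((\<lambda>r. Psi TYPE('n) r - Psi TYPE('n) r0) \<longlongrightarrow> 0) (at r0 within {0..})"
    by (rule Lim_null_comparison)
  then show "(Psi TYPE('n) \<longlongrightarrow> Psi TYPE('n) r0) (at r0 within {0..})"
    by (simp add: LIM_zero_iff)
qed

lemma Psi_tendsto_1: "(\<lambda>k. Psi TYPE('n::finite) (real k)) \<longlonglongrightarrow> 1"
proof -
  interpret prob_space "gaussian_measure TYPE('n)"
    by (rule prob_space_gaussian_measure)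
  have "(\<lambda>k. prob (cball (0::real^'n) (real k))) \<longlonglongrightarrow> prob (\<Union>k. cball 0 (real k))"
  proof (rule Lim_measure_incseq)
    show "incseq (\<lambda>k. cball (0::real^'n) (real k))"
      by (auto simp: incseq_def)
  qed auto
  also have "(\<Union>k. cball (0::real^'n) (real k)) = space (gaussian_measure TYPE('n))"
    by (auto simp: real_arch_simple)
  finally show ?thesis
    using prob_space by (simp add: Psi_eq_measure_cball)
qed

lemma Psi_surj:
  assumes "0 < x" "x < 1"
  obtains r where "r > 0" "Psi TYPE('n::finite) r = x"
proof -
  obtain k :: nat where k: "x < Psi TYPE('n) (real k)"
    using order_tendstoD(1)[OF Psi_tendsto_1[where 'n='n] assms(2)]
    by (metis eventually_sequentially order.refl)
  have "continuous_on {0..real k} (Psi TYPE('n))"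
    by (rule continuous_on_subset[OF Psi_continuous_on]) auto
  then obtain r where r: "0 \<le> r" "Psi TYPE('n) r = x"
    using IVT'[of "Psi TYPE('n)" 0 x "real k"] k assms by (auto simp: Psi_0)
  moreover have "r \<noteq> 0"
    using r assms by (auto simp: Psi_0)
  ultimately show ?thesis
    using that[of r] by simp
qed

lemma exp_norm_ge_step_function:
  fixes x :: "'a::real_normed_vector"
  shows "exp (- r\<^sup>2 / 2) * indicator (cball 0 r) x
      + (exp (- (r / 2)\<^sup>2 / 2) - exp (- r\<^sup>2 / 2)) * indicator (ball 0 (r / 2)) x
    \<le> exp (- (norm x)\<^sup>2 / 2) * indicator (cball 0 r) x"
proof (cases "norm x \<le> r")
  case True
  then have "exp (- r\<^sup>2 / 2) \<le> exp (- (norm x)\<^sup>2 / 2)"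
    by (simp add: power_mono)
  show ?thesis
  proof (cases "norm x < r / 2")
    case inner: True
    then have "(norm x)\<^sup>2 \<le> (r / 2)\<^sup>2"
      by (intro power_mono) auto
    with True inner show ?thesis
      by (simp add: dist_norm)
  next
    case False
    with True \<open>exp (- r\<^sup>2 / 2) \<le> exp (- (norm x)\<^sup>2 / 2)\<close> show ?thesis
      by (simp add: dist_norm)
  qed
next
  case False
  moreover have "r / 2 < norm x"
    using False norm_ge_zero[of x] by linarith
  ultimately show ?thesis
    by (simp add: dist_norm)
qed

lemma Psi_gt_boundary_density:
  assumes "r > 0"
  shows "(2 * pi) powr (- real CARD('n) / 2) * exp (- r\<^sup>2 / 2)
      * unit_ball_vol (real CARD('n)) * r ^ CARD('n) < Psi TYPE('n::finite) r"
proof -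
  let ?p = "(2 * pi) powr (- real CARD('n) / 2)" and ?w = "unit_ball_vol (real CARD('n))"
  let ?C = "cball (0::real^'n) r" and ?B = "ball (0::real^'n) (r / 2)"
  define a where "a = ?p * exp (- r\<^sup>2 / 2)"
  \<comment> \<open>The extra step \<open>b\<close> on the ball of radius \<open>r / 2\<close> is what makes the bound strict.\<close>
  define b where "b = ?p * (exp (- (r / 2)\<^sup>2 / 2) - exp (- r\<^sup>2 / 2))"
  have "(r / 2)\<^sup>2 < r\<^sup>2"
    using assms by (simp add: power_strict_mono)
  then have "b > 0"
    by (simp add: b_def)
  have "a \<ge> 0"
    by (simp add: a_def)
  have [measurable]: "?C \<in> sets borel" "?B \<in> sets borel"
    by auto
  have "ennreal (a * ?w * r ^ CARD('n) + b * ?w * (r / 2) ^ CARD('n))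
      = ennreal a * emeasure lborel ?C + ennreal b * emeasure lborel ?B"
    using assms \<open>a \<ge> 0\<close> \<open>b > 0\<close>
    by (simp add: emeasure_cball emeasure_ball ennreal_plus ennreal_mult mult.assoc)
  also have "\<dots> = (\<integral>\<^sup>+x. ennreal a * indicator ?C x + ennreal b * indicator ?B x \<partial>lborel)"
    by (simp add: nn_integral_add nn_integral_cmult_indicator)
  also have "\<dots> = (\<integral>\<^sup>+x. ennreal (a * indicator ?C x + b * indicator ?B x) \<partial>lborel)"
    using \<open>a \<ge> 0\<close> \<open>b > 0\<close>
    by (intro nn_integral_cong) (simp add: ennreal_plus ennreal_mult ennreal_indicator)
  also have "\<dots> \<le> (\<integral>\<^sup>+x. ennreal (?p * exp (- (norm x)\<^sup>2 / 2) * indicator ?C x) \<partial>lborel)"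
    using mult_left_mono[OF exp_norm_ge_step_function, of ?p]
    by (intro nn_integral_mono ennreal_leI) (simp add: a_def b_def algebra_simps)
  also have "\<dots> = ennreal (Psi TYPE('n) r)"
    by (simp add: Psi_eq_measure_cball emeasure_gaussian_measure_eq_measure[symmetric]
        emeasure_gaussian_measure ennreal_mult ennreal_indicator)
  finally have "a * ?w * r ^ CARD('n) + b * ?w * (r / 2) ^ CARD('n) \<le> Psi TYPE('n) r"
    by (subst (asm) ennreal_le_iff) (auto simp: Psi_eq_measure_cball)
  moreover have "b * ?w * (r / 2) ^ CARD('n) > 0"
    using \<open>b > 0\<close> assms by simp
  ultimately show ?thesis
    by (simp add: a_def)
qed

lemma chi_constant_eq:
  assumes "n > 0"
  shows "1 / (2 powr (real n / 2 - 1) * Gamma (real n / 2))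
    = real n * (2 * pi) powr (- real n / 2) * unit_ball_vol (real n)"
proof -
  have Gamma_succ: "Gamma (real n / 2 + 1) = real n / 2 * Gamma (real n / 2)"
    using assms by (intro Gamma_plus1) (auto simp: nonpos_Ints_def)
  have "Gamma (real n / 2) > 0"
    using assms by (intro Gamma_real_pos) auto
  have pi_cancel: "(2 * pi) powr (- real n / 2) * pi powr (real n / 2) = 2 powr (- real n / 2)"
    by (simp add: powr_mult powr_minus field_simps)
  have "2 powr (real n / 2 - 1) * 2 powr (- real n / 2) = 2 powr (-1)"
    by (simp add: powr_add[symmetric])
  then have two: "2 powr (real n / 2 - 1) * 2 powr (- real n / 2) = 1 / 2"
    by (simp add: powr_minus)
  have "real n * (2 * pi) powr (- real n / 2) * unit_ball_vol (real n)
      = real n * ((2 * pi) powr (- real n / 2) * pi powr (real n / 2)) / Gamma (real n / 2 + 1)"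
    by (simp add: unit_ball_vol_def)
  also have "\<dots> = 2 * 2 powr (- real n / 2) / Gamma (real n / 2)"
    using assms \<open>Gamma (real n / 2) > 0\<close> by (simp only: pi_cancel Gamma_succ) (simp add: field_simps)
  also have "\<dots> = 1 / (2 powr (real n / 2 - 1) * Gamma (real n / 2))"
    using \<open>Gamma (real n / 2) > 0\<close> two by (simp add: field_simps)
  finally show ?thesis ..
qed

lemma chi_term_lt_Psi:
  assumes "r > 0"
  shows "1 / (2 powr (real CARD('n) / 2 - 1) * Gamma (real CARD('n) / 2)) * r ^ CARD('n) * exp (- r\<^sup>2 / 2)
    < real CARD('n) * Psi TYPE('n::finite) r"
proof -
  have "1 / (2 powr (real CARD('n) / 2 - 1) * Gamma (real CARD('n) / 2)) * r ^ CARD('n) * exp (- r\<^sup>2 / 2)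
      = real CARD('n) * ((2 * pi) powr (- real CARD('n) / 2) * exp (- r\<^sup>2 / 2)
          * unit_ball_vol (real CARD('n)) * r ^ CARD('n))"
    by (simp add: chi_constant_eq)
  also have "\<dots> < real CARD('n) * Psi TYPE('n) r"
    using Psi_gt_boundary_density[OF assms, where 'n='n] by simp
  finally show ?thesis .
qed

section \<open>Strict convexity via derivatives\<close>

lemma strict_convex_on_realI:
  assumes "connected A"
    and deriv: "\<And>x. x \<in> A \<Longrightarrow> (f has_real_derivative f' x) (at x)"
    and mono: "\<And>x y. x \<in> A \<Longrightarrow> y \<in> A \<Longrightarrow> x < y \<Longrightarrow> f' x < f' y"
  shows "strict_convex_on A f"
proof -
  have chord_above: "f ((1 - t) * x + t * y) < (1 - t) * f x + t * f y"
    if xy: "x \<in> A" "y \<in> A" "x < y" and t: "0 < t" "t < 1" for x y t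
  proof -
    define z where "z = (1 - t) * x + t * y"
    have ivl: "{x..y} \<subseteq> A"
      using connected_contains_Icc[OF assms(1) xy(1,2)] .
    have zx: "z - x = t * (y - x)" and yz: "y - z = (1 - t) * (y - x)"
      by (simp_all add: z_def algebra_simps)
    have "0 < t * (y - x)" "0 < (1 - t) * (y - x)"
      using xy t by simp_all
    then have "x < z" "z < y"
      unfolding zx[symmetric] yz[symmetric] by simp_all
    have deriv_ivl: "(f has_real_derivative f' u) (at u)" if "x \<le> u" "u \<le> y" for u
      using deriv ivl that by auto
    have "\<exists>\<xi>. x < \<xi> \<and> \<xi> < z \<and> f z - f x = (z - x) * f' \<xi>"
      by (rule MVT2) (use \<open>x < z\<close> \<open>z < y\<close> deriv_ivl in auto)
    then obtain \<xi> where \<xi>: "x < \<xi>" "\<xi> < z" "f z - f x = (z - x) * f' \<xi>"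
      by blast
    have "\<exists>\<eta>. z < \<eta> \<and> \<eta> < y \<and> f y - f z = (y - z) * f' \<eta>"
      by (rule MVT2) (use \<open>x < z\<close> \<open>z < y\<close> deriv_ivl in auto)
    then obtain \<eta> where \<eta>: "z < \<eta>" "\<eta> < y" "f y - f z = (y - z) * f' \<eta>"
      by blast
    have "f' \<xi> < f' \<eta>"
      using \<xi> \<eta> ivl by (intro mono) auto
    then have "(1 - t) * t * (y - x) * f' \<xi> < (1 - t) * t * (y - x) * f' \<eta>"
      using xy t by simp
    then have "(1 - t) * (f z - f x) < t * (f y - f z)"
      by (simp add: \<xi>(3) \<eta>(3) zx yz ac_simps)
    then show ?thesis
      by (simp add: z_def algebra_simps)
  qed
  show ?thesis
    unfolding strict_convex_on_def
  proof (intro ballI allI impI)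
    fix x y t :: real
    assume "x \<in> A" "y \<in> A" and "x \<noteq> y \<and> 0 < t \<and> t < 1"
    then consider "x < y" | "y < x"
      by linarith
    then show "f ((1 - t) * x + t * y) < (1 - t) * f x + t * f y"
    proof cases
      case 1
      then show ?thesis
        using chord_above \<open>x \<in> A\<close> \<open>y \<in> A\<close> \<open>x \<noteq> y \<and> 0 < t \<and> t < 1\<close> by blast
    next
      case 2
      then show ?thesis
        using chord_above[of y x "1 - t"] \<open>x \<in> A\<close> \<open>y \<in> A\<close> \<open>x \<noteq> y \<and> 0 < t \<and> t < 1\<close>
        by (simp add: algebra_simps)
    qed
  qed
qed

lemma strict_convex_on_power_comp:
  fixes \<sigma> \<sigma>' \<sigma>'' :: "real \<Rightarrow> real"
  assumes "n > 0"
    and d1: "\<And>x. x \<in> {0<..<1} \<Longrightarrow> (\<sigma> has_real_derivative \<sigma>' x) (at x)"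
    and d2: "\<And>x. x \<in> {0<..<1} \<Longrightarrow> (\<sigma>' has_real_derivative \<sigma>'' x) (at x)"
    and pos: "\<And>x. x \<in> {0<..<1} \<Longrightarrow> real n * x * \<sigma>'' x + (real n - 1) * \<sigma>' x > 0"
  shows "strict_convex_on {0<..<1} (\<lambda>y. \<sigma> (y ^ n))"
proof -
  have power_mem: "y ^ n \<in> {0<..<1}" if "y \<in> {0<..<1}" for y :: real
    using that \<open>n > 0\<close> power_strict_mono[of y 1 n] by auto
  \<comment> \<open>Also valid for \<open>m = 0\<close>, where \<open>m - 1\<close> truncates; this handles \<open>n = 1\<close> uniformly.\<close>
  have power_pred: "real m * y ^ (m - 1) * y = real m * y ^ m" for m and y :: real
    by (cases m) auto
  define g' where "g' y = \<sigma>' (y ^ n) * (real n * y ^ (n - 1))" for y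
  define g'' where "g'' y = \<sigma>' (y ^ n) * (real n * (real (n - 1) * y ^ (n - 1 - 1)))
      + \<sigma>'' (y ^ n) * (real n * y ^ (n - 1)) * (real n * y ^ (n - 1))" for y
  have dg: "((\<lambda>y. \<sigma> (y ^ n)) has_real_derivative g' y) (at y)" if "y \<in> {0<..<1}" for y
    unfolding g'_def using DERIV_chain2[OF d1[OF power_mem[OF that]] DERIV_pow] by simp
  have dg': "(g' has_real_derivative g'' y) (at y)" if "y \<in> {0<..<1}" for y
  proof -
    have "((\<lambda>y. \<sigma>' (y ^ n)) has_real_derivative \<sigma>'' (y ^ n) * (real n * y ^ (n - 1))) (at y)"
      using DERIV_chain2[OF d2[OF power_mem[OF that]] DERIV_pow] by simp
    moreover have "((\<lambda>y. real n * y ^ (n - 1)) has_real_derivative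
        real n * (real (n - 1) * y ^ (n - 1 - 1))) (at y)"
      using DERIV_cmult[OF DERIV_pow[of "n - 1" y], of "real n"] by simp
    ultimately show ?thesis
      unfolding g'_def g''_def by (rule DERIV_mult')
  qed
  have g''_pos: "g'' y > 0" if y: "y \<in> {0<..<1}" for y
  proof -
    have e1: "y ^ (n - 1) * y = y ^ n"
      using \<open>n > 0\<close> by (cases n) (simp_all add: power_Suc2)
    have "real (n - 1) * y ^ (n - 1 - 1) * y * y = real (n - 1) * y ^ (n - 1) * y"
      by (simp only: power_pred)
    also have "\<dots> = real (n - 1) * y ^ n"
      by (simp only: mult.assoc e1)
    finally have e2: "real (n - 1) * y ^ (n - 1 - 1) * y * y = real (n - 1) * y ^ n" .
    have "y\<^sup>2 * g'' y = real n * \<sigma>' (y ^ n) * (real (n - 1) * y ^ (n - 1 - 1) * y * y)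
        + (real n)\<^sup>2 * \<sigma>'' (y ^ n) * ((y ^ (n - 1) * y) * (y ^ (n - 1) * y))"
      by (simp add: g''_def power2_eq_square algebra_simps)
    also have "\<dots> = real n * \<sigma>' (y ^ n) * (real (n - 1) * y ^ n)
        + (real n)\<^sup>2 * \<sigma>'' (y ^ n) * (y ^ n * y ^ n)"
      by (simp only: e1 e2)
    also have "\<dots> = real n * y ^ n * (real n * y ^ n * \<sigma>'' (y ^ n) + (real n - 1) * \<sigma>' (y ^ n))"
      using \<open>n > 0\<close> by (simp add: of_nat_diff power2_eq_square algebra_simps)
    finally have "y\<^sup>2 * g'' y
        = real n * y ^ n * (real n * y ^ n * \<sigma>'' (y ^ n) + (real n - 1) * \<sigma>' (y ^ n))" .
    moreover have "real n * y ^ n * (real n * y ^ n * \<sigma>'' (y ^ n) + (real n - 1) * \<sigma>' (y ^ n)) > 0"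
      using pos[OF power_mem[OF y]] \<open>n > 0\<close> y by (intro mult_pos_pos) auto
    moreover have "y\<^sup>2 > 0"
      using y by simp
    ultimately show ?thesis
      by (metis zero_less_mult_pos)
  qed
  have "g' a < g' b" if "0 < a" "a < b" "b < 1" for a b
  proof (rule DERIV_pos_imp_increasing[OF \<open>a < b\<close>])
    fix x
    assume "a \<le> x" "x \<le> b"
    then have "x \<in> {0<..<1}"
      using that by auto
    then show "\<exists>y. (g' has_real_derivative y) (at x) \<and> y > 0"
      using dg' g''_pos by blast
  qed
  then show ?thesis
    by (intro strict_convex_on_realI[OF _ dg]) auto
qed

theorem mainTheorem5:
  fixes \<sigma> \<sigma>' \<sigma>'' :: "real \<Rightarrow> real"
  defines "n \<equiv> CARD('n::finite)"
  defines "c \<equiv> 1 / (2 powr (real n / 2 - 1) * Gamma (real n / 2))"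
  assumes incr: "strict_mono_on {0..1} \<sigma>"
    and d1: "\<And>x. x \<in> {0<..<1} \<Longrightarrow> (\<sigma> has_real_derivative \<sigma>' x) (at x)"
    and d2: "\<And>x. x \<in> {0<..<1} \<Longrightarrow> (\<sigma>' has_real_derivative \<sigma>'' x) (at x)"
    and pos: "\<And>x. x \<in> {0<..<1} \<Longrightarrow> \<sigma>' x > 0"
    and ode: "\<And>r. r > 0 \<Longrightarrow>
      1 + \<sigma>'' (Psi TYPE('n) r) * Psi TYPE('n) r / \<sigma>' (Psi TYPE('n) r)
        = 2 / real n - c / ((real n)\<^sup>2 * Psi TYPE('n) r) * r ^ n * exp (- r\<^sup>2 / 2)"
  shows "strict_convex_on {0<..<1} (\<lambda>y. \<sigma> (y ^ n))"
proof (rule strict_convex_on_power_comp[OF _ d1 d2])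
  show "n > 0"
    by (simp add: n_def)
  fix x :: real
  assume x: "x \<in> {0<..<1}"
  then obtain r where r: "r > 0" "Psi TYPE('n) r = x"
    using Psi_surj[of x] by auto
  define q where "q = c * r ^ n * exp (- r\<^sup>2 / 2)"
  have "q < real n * x"
    using chi_term_lt_Psi[OF \<open>r > 0\<close>, where 'n='n] r by (simp add: q_def c_def n_def)
  have "real n * x * \<sigma>'' x + (real n - 1) * \<sigma>' x = \<sigma>' x * (1 - q / (real n * x))"
    using ode[OF \<open>r > 0\<close>] r pos[OF x] x \<open>n > 0\<close>
    by (simp add: q_def field_simps power2_eq_square)
  also have "\<dots> > 0"
    using \<open>q < real n * x\<close> pos[OF x] x \<open>n > 0\<close> by simp
  finally show "real n * x * \<sigma>'' x + (real n - 1) * \<sigma>' x > 0" .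
qed

end
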